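(* Let $({\rm X},{\sf d},{\mbox{m}})$ be an $\mathrm{RCD}(K,N)$ space, $({\rm Y},{\sf d}_{\rm Y},\bar y)$ a pointed ${\sf CAT}(0)$ space, $\Omega\subset{\rm X}$ open, $\bar u\in{\sf KS}^{1,2}(\Omega,{\rm Y}_{\bar y})$ and $u\in L^2(\Omega,{\rm Y}_{\bar y})$, and let $(u_t)_{t\ge0}$ (with $u_0=u$) be the gradient flow trajectory of ${\sf E}^{\sf KS}_{\bar u}$ in $L^2(\Omega,{\rm Y}_{\bar y})$ starting from $u$. Then there is a separable subset $\tilde{\rm Y}\subset{\rm Y}$ which is a ${\sf CAT}(0)$ space with the induced metric and such that ${\mbox{m}}(u_t^{-1}({\rm Y}\setminus\tilde{\rm Y}))=0$ for every $t\ge0$. The same holds with ${\sf E}^{\sf KS}$ in place of ${\sf E}^{\sf KS}_{\bar u}$.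
   Context: $\mathrm{RCD}(K,N)$ spaces ($K\in\mathbb{R}$, $N\in[1,\infty)$) are the standard class of metric measure spaces with Riemannian Ricci curvature bounded below by $K$ and dimension above by $N$; $W^{1,2}(\Omega),W^{1,2}_0(\Omega)$ the usual Sobolev spaces. ${\sf CAT}(0)$: complete geodesic metric space with ${\sf d}^2(\gamma_t,a)\le(1-t){\sf d}^2(\gamma_0,a)+t{\sf d}^2(\gamma_1,a)-t(1-t){\sf d}^2(\gamma_0,\gamma_1)$ along constant speed geodesics. $L^2(\Omega,{\rm Y}_{\bar y})$: Borel essentially separably valued maps with $\int_\Omega{\sf d}^2_{\rm Y}(u,\bar y)\,{\rm d}{\mbox{m}}<\infty$ mod a.e. equality, with distance ${\sf d}_{L^2}^2(u,v)=\int_\Omega{\sf d}^2_{\rm Y}(u,v)\,{\rm d}{\mbox{m}}$ (a ${\sf CAT}(0)$ space). Korevaar–Schoen energy: ${\sf ks}_{2,r}[u,\Omega](x):=\big(\frac1{{\mbox{m}}(B_r(x))}\int_{B_r(x)}\frac{{\sf d}^2_{\rm Y}(u(x),u(\tilde x))}{r^2}{\rm d}{\mbox{m}}(\tilde x)\big)^{1/2}$ if $B_r(x)\subset\Omega$, $0$ otherwise; ${\sf E}^{\sf KS}(u):=\limsup_{r\downarrow0}\frac12\int_\Omega{\sf ks}^2_{2,r}[u,\Omega]\,{\rm d}{\mbox{m}}$; ${\sf KS}^{1,2}$ the finite energy maps; ${\sf E}^{\sf KS}_{\bar u}(u):={\sf E}^{\sf KS}(u)$ if $u\in{\sf KS}^{1,2}$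 and ${\sf d}_{\rm Y}(u,\bar u)\in W^{1,2}_0(\Omega)$, $+\infty$ otherwise; both are convex and lower semicontinuous on $L^2(\Omega,{\rm Y}_{\bar y})$. Gradient flow trajectory of a convex lsc ${\sf E}$ on a ${\sf CAT}(0)$ space starting at $u\in\overline{D({\sf E})}$: locally absolutely continuous $t\mapsto u_t$ with $u_t\to u$ as $t\downarrow0$ and $\frac{{\rm d}}{{\rm d}t}\frac{{\sf d}^2(u_t,w)}2+{\sf E}(u_t)\le{\sf E}(w)$ for a.e. $t>0$ and all $w$ (it exists and is unique). *)

theory Defs
  imports "HOL-Probability.Probability"
begin

section \<open>CAT(0) spaces (a subset S of a metric space with the induced metric)\<close>

definition geodesic_in :: "'b::metric_space set \<Rightarrow> (real \<Rightarrow> 'b) \<Rightarrow> 'b \<Rightarrow> 'b \<Rightarrow> bool" where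
  "geodesic_in S \<gamma> x y \<longleftrightarrow> \<gamma> 0 = x \<and> \<gamma> 1 = y \<and> (\<forall>t\<in>{0..1}. \<gamma> t \<in> S) \<and>
     (\<forall>s\<in>{0..1}. \<forall>t\<in>{0..1}. dist (\<gamma> s) (\<gamma> t) = \<bar>s - t\<bar> * dist x y)"

definition CAT0 :: "'b::metric_space set \<Rightarrow> bool" where
  "CAT0 S \<longleftrightarrow>
     (\<forall>f. (\<forall>n. f n \<in> S) \<and> Cauchy f \<longrightarrow> (\<exists>l\<in>S. f \<longlonglongrightarrow> l)) \<and>
     (\<forall>x\<in>S. \<forall>y\<in>S. \<exists>\<gamma>. geodesic_in S \<gamma> x y) \<and>
     (\<forall>\<gamma> x y a. geodesic_in S \<gamma> x y \<and> a \<in> S \<longrightarrow>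
        (\<forall>t\<in>{0..1}. (dist (\<gamma> t) a)\<^sup>2 \<le> (1 - t) * (dist x a)\<^sup>2 + t * (dist y a)\<^sup>2
                                      - t * (1 - t) * (dist x y)\<^sup>2))"

definition separable_set :: "'b::metric_space set \<Rightarrow> bool" where
  "separable_set S \<longleftrightarrow> (\<exists>C. countable C \<and> C \<subseteq> S \<and> S \<subseteq> closure C)"

definition P2 :: "'a::metric_space measure set" where
  "P2 = {\<mu>. prob_space \<mu> \<and> sets \<mu> = sets borel \<and>
           (\<exists>x0. (\<integral>\<^sup>+x. ennreal ((dist x x0)\<^sup>2) \<partial>\<mu>) < \<infinity>)}"

definition couplings :: "'a::metric_space measure \<Rightarrow> 'a measure \<Rightarrow> ('a \<times> 'a) measure set" where
  "couplings \<mu> \<nu> = {q. prob_space q \<and> sets q = sets (borel :: ('a \<times> 'a) measure) \<and>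
                       distr q borel fst = \<mu> \<and> distr q borel snd = \<nu>}"

definition transport_cost :: "('a::metric_space \<times> 'a) measure \<Rightarrow> ennreal" where
  "transport_cost q = (\<integral>\<^sup>+p. ennreal ((dist (fst p) (snd p))\<^sup>2) \<partial>q)"

definition W2sq :: "'a::metric_space measure \<Rightarrow> 'a measure \<Rightarrow> ennreal" where
  "W2sq \<mu> \<nu> = (INF q\<in>couplings \<mu> \<nu>. transport_cost q)"

definition optimal_coupling :: "'a::metric_space measure \<Rightarrow> 'a measure \<Rightarrow> ('a \<times> 'a) measure \<Rightarrow> bool" where
  "optimal_coupling \<mu> \<nu> q \<longleftrightarrow> q \<in> couplings \<mu> \<nu> \<and> transport_cost q = W2sq \<mu> \<nu>"

definition W2_geodesic :: "(real \<Rightarrow> 'a::metric_space measure) \<Rightarrow> 'a measure \<Rightarrow> 'a measure \<Rightarrow> bool" where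
  "W2_geodesic \<Gamma> \<mu>0 \<mu>1 \<longleftrightarrow> \<Gamma> 0 = \<mu>0 \<and> \<Gamma> 1 = \<mu>1 \<and> (\<forall>t\<in>{0..1}. \<Gamma> t \<in> P2) \<and>
     (\<forall>s\<in>{0..1}. \<forall>t\<in>{0..1}. W2sq (\<Gamma> s) (\<Gamma> t) = ennreal ((s - t)\<^sup>2) * W2sq \<mu>0 \<mu>1)"

definition sigma_coeff :: "real \<Rightarrow> real \<Rightarrow> real \<Rightarrow> real \<Rightarrow> ennreal" where
  "sigma_coeff K N t \<theta> =
     (if K * \<theta>\<^sup>2 \<ge> N * pi\<^sup>2 then \<infinity>
      else if K * \<theta>\<^sup>2 > 0 then ennreal (sin (t * \<theta> * sqrt (K / N)) / sin (\<theta> * sqrt (K / N)))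
      else if K * \<theta>\<^sup>2 = 0 then ennreal t
      else ennreal (sinh (t * \<theta> * sqrt (- K / N)) / sinh (\<theta> * sqrt (- K / N))))"

definition tau_coeff :: "real \<Rightarrow> real \<Rightarrow> real \<Rightarrow> real \<Rightarrow> ennreal" where
  "tau_coeff K N t \<theta> =
     (if N = 1 then (if K > 0 then \<infinity> else ennreal t)
      else if sigma_coeff K (N - 1) t \<theta> = \<infinity> then \<infinity>
      else ennreal (t powr (1 / N) * (enn2real (sigma_coeff K (N - 1) t \<theta>)) powr (1 - 1 / N)))"

definition ac_bounded :: "'a::metric_space measure \<Rightarrow> 'a measure \<Rightarrow> ('a \<Rightarrow> real) \<Rightarrow> bool" where
  "ac_bounded M \<mu> \<rho> \<longleftrightarrow> \<mu> \<in> P2 \<and> \<rho> \<in> borel_measurable M \<and> (\<forall>x. 0 \<le> \<rho> x) \<and>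
     \<mu> = density M (\<lambda>x. ennreal (\<rho> x)) \<and> (\<exists>x0 r. emeasure \<mu> (UNIV - cball x0 r) = 0)"

text \<open>The curvature-dimension condition CD(K,N) in the sense of Sturm / Lott--Villani:
  the Renyi entropy S_N'(mu|m) = - integral of rho^(1-1/N') (rho the density of the absolutely
  continuous part of mu) satisfies the tau-distorted convexity inequality along some
  W2-geodesic induced by some optimal coupling.\<close>
definition CD :: "real \<Rightarrow> real \<Rightarrow> 'a::metric_space measure \<Rightarrow> bool" where
  "CD K N M \<longleftrightarrow>
    (\<forall>\<mu>0 \<mu>1 \<rho>0 \<rho>1. ac_bounded M \<mu>0 \<rho>0 \<and> ac_bounded M \<mu>1 \<rho>1 \<longrightarrow>
      (\<exists>q \<Gamma>. optimal_coupling \<mu>0 \<mu>1 q \<and> W2_geodesic \<Gamma> \<mu>0 \<mu>1 \<and>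
        (\<forall>t\<in>{0<..<1}. \<forall>N'\<ge>N. \<exists>\<rho>t Z.
           \<rho>t \<in> borel_measurable M \<and> (\<forall>x. 0 \<le> \<rho>t x) \<and> Z \<in> null_sets M \<and>
           (\<forall>A\<in>sets M. emeasure (\<Gamma> t) (A - Z) = (\<integral>\<^sup>+x\<in>A. ennreal (\<rho>t x) \<partial>M)) \<and>
           (\<integral>\<^sup>+p. tau_coeff K N' (1 - t) (dist (fst p) (snd p)) * ennreal (\<rho>0 (fst p) powr (- 1 / N'))
                 + tau_coeff K N' t (dist (fst p) (snd p)) * ennreal (\<rho>1 (snd p) powr (- 1 / N')) \<partial>q)
             \<le> (\<integral>\<^sup>+x. ennreal (\<rho>t x powr (1 - 1 / N')) \<partial>M))))"

definition lipschitz_fun :: "('a::metric_space \<Rightarrow> real) \<Rightarrow> bool" where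
  "lipschitz_fun f \<longleftrightarrow> (\<exists>L. \<forall>x y. \<bar>f x - f y\<bar> \<le> L * dist x y)"

text \<open>Local Lipschitz constant (slope); it is 0 at isolated points.\<close>
definition lip :: "('a::metric_space \<Rightarrow> real) \<Rightarrow> 'a \<Rightarrow> ennreal" where
  "lip f x = Limsup (at x) (\<lambda>y. ennreal (\<bar>f y - f x\<bar> / dist y x))"

definition L2fun :: "'a::metric_space measure \<Rightarrow> ('a \<Rightarrow> real) set" where
  "L2fun M = {f. f \<in> borel_measurable M \<and> (\<integral>\<^sup>+x. ennreal ((f x)\<^sup>2) \<partial>M) < \<infinity>}"

definition L2_to :: "'a::metric_space measure \<Rightarrow> (nat \<Rightarrow> 'a \<Rightarrow> real) \<Rightarrow> ('a \<Rightarrow> real) \<Rightarrow> bool" where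
  "L2_to M F f \<longleftrightarrow> ((\<lambda>n. \<integral>\<^sup>+x. ennreal ((F n x - f x)\<^sup>2) \<partial>M) \<longlonglongrightarrow> 0)"

definition Cheeger :: "'a::metric_space measure \<Rightarrow> ('a \<Rightarrow> real) \<Rightarrow> ennreal" where
  "Cheeger M f = (INF F\<in>{F. (\<forall>n. lipschitz_fun (F n) \<and> F n \<in> L2fun M) \<and> L2_to M F f}.
                    liminf (\<lambda>n. (\<integral>\<^sup>+x. (lip (F n) x)\<^sup>2 \<partial>M) / 2))"

definition inf_hilbertian :: "'a::metric_space measure \<Rightarrow> bool" where
  "inf_hilbertian M \<longleftrightarrow> (\<forall>f\<in>L2fun M. \<forall>g\<in>L2fun M.
     Cheeger M (\<lambda>x. f x + g x) + Cheeger M (\<lambda>x. f x - g x) = 2 * Cheeger M f + 2 * Cheeger M g)"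

text \<open>RCD(K,N) space: complete separable metric space (type class polish_space) with a Borel
  measure finite and positive on balls (full support), satisfying CD(K,N) and infinitesimally
  Hilbertian.\<close>
definition RCD :: "real \<Rightarrow> real \<Rightarrow> 'a::polish_space measure \<Rightarrow> bool" where
  "RCD K N M \<longleftrightarrow> 1 \<le> N \<and> sets M = sets borel \<and>
     (\<forall>x r. r > 0 \<longrightarrow> 0 < emeasure M (ball x r) \<and> emeasure M (ball x r) < \<infinity>) \<and>
     CD K N M \<and> inf_hilbertian M"

text \<open>W^{1,2}_0(Omega): functions on Omega whose extension by 0 lies in the W^{1,2}(X)-closure of
  Lipschitz functions with compact support contained in Omega.\<close>
definition W120 :: "'a::metric_space measure \<Rightarrow> 'a set \<Rightarrow> ('a \<Rightarrow> real) \<Rightarrow> bool" where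
  "W120 M \<Omega> g \<longleftrightarrow> (\<exists>f h. f \<in> L2fun M \<and> Cheeger M f < \<infinity> \<and>
      (AE x in M. x \<in> \<Omega> \<longrightarrow> f x = g x) \<and> (AE x in M. x \<notin> \<Omega> \<longrightarrow> f x = 0) \<and>
      (\<forall>n. lipschitz_fun (h n) \<and> compact (closure {x. h n x \<noteq> 0}) \<and> closure {x. h n x \<noteq> 0} \<subseteq> \<Omega>) \<and>
      L2_to M h f \<and> ((\<lambda>n. Cheeger M (\<lambda>x. h n x - f x)) \<longlonglongrightarrow> 0))"

definition L2Y :: "'a::metric_space measure \<Rightarrow> 'a set \<Rightarrow> 'b::metric_space \<Rightarrow> ('a \<Rightarrow> 'b) set" where
  "L2Y M \<Omega> ybar = {u. u \<in> borel_measurable (restrict_space M \<Omega>) \<and>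
       (\<exists>Z\<in>null_sets M. separable_set (u ` (\<Omega> - Z))) \<and>
       (\<integral>\<^sup>+x\<in>\<Omega>. ennreal ((dist (u x) ybar)\<^sup>2) \<partial>M) < \<infinity>}"

definition dL2 :: "'a::metric_space measure \<Rightarrow> 'a set \<Rightarrow> ('a \<Rightarrow> 'b::metric_space) \<Rightarrow> ('a \<Rightarrow> 'b) \<Rightarrow> real" where
  "dL2 M \<Omega> u v = sqrt (enn2real (\<integral>\<^sup>+x\<in>\<Omega>. ennreal ((dist (u x) (v x))\<^sup>2) \<partial>M))"

definition ks2 :: "'a::metric_space measure \<Rightarrow> 'a set \<Rightarrow> ('a \<Rightarrow> 'b::metric_space) \<Rightarrow> real \<Rightarrow> 'a \<Rightarrow> ennreal" where
  "ks2 M \<Omega> u r x = (if ball x r \<subseteq> \<Omega>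
      then (\<integral>\<^sup>+y\<in>ball x r. ennreal ((dist (u x) (u y))\<^sup>2 / r\<^sup>2) \<partial>M) / emeasure M (ball x r)
      else 0)"

definition E_KS :: "'a::metric_space measure \<Rightarrow> 'a set \<Rightarrow> ('a \<Rightarrow> 'b::metric_space) \<Rightarrow> ennreal" where
  "E_KS M \<Omega> u = Limsup (at_right 0) (\<lambda>r. (\<integral>\<^sup>+x\<in>\<Omega>. ks2 M \<Omega> u r x \<partial>M) / 2)"

definition KS12 :: "'a::metric_space measure \<Rightarrow> 'a set \<Rightarrow> 'b::metric_space \<Rightarrow> ('a \<Rightarrow> 'b) set" where
  "KS12 M \<Omega> ybar = {u \<in> L2Y M \<Omega> ybar. E_KS M \<Omega> u < \<infinity>}"

definition E_KS_bc :: "'a::metric_space measure \<Rightarrow> 'a set \<Rightarrow> 'b::metric_space \<Rightarrow> ('a \<Rightarrow> 'b) \<Rightarrow> ('a \<Rightarrow> 'b) \<Rightarrow> ennreal" where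
  "E_KS_bc M \<Omega> ybar ubar u =
     (if u \<in> KS12 M \<Omega> ybar \<and> W120 M \<Omega> (\<lambda>x. dist (u x) (ubar x)) then E_KS M \<Omega> u else \<infinity>)"

section \<open>Gradient flow trajectories (EVI formulation) on a (pseudo)metric set\<close>

definition loc_abs_cont :: "('c \<Rightarrow> 'c \<Rightarrow> real) \<Rightarrow> (real \<Rightarrow> 'c) \<Rightarrow> bool" where
  "loc_abs_cont d U \<longleftrightarrow> (\<forall>a b. 0 < a \<and> a < b \<longrightarrow>
     (\<exists>g. (\<forall>s. 0 \<le> g s) \<and> g integrable_on {a..b} \<and>
          (\<forall>s t. a \<le> s \<and> s \<le> t \<and> t \<le> b \<longrightarrow> d (U s) (U t) \<le> integral {s..t} g)))"

definition grad_flow :: "'c set \<Rightarrow> ('c \<Rightarrow> 'c \<Rightarrow> real) \<Rightarrow> ('c \<Rightarrow> ennreal) \<Rightarrow> 'c \<Rightarrow> (real \<Rightarrow> 'c) \<Rightarrow> bool" where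
  "grad_flow S d E u U \<longleftrightarrow>
     u \<in> S \<and> (\<forall>\<epsilon>>0. \<exists>v\<in>S. E v < \<infinity> \<and> d u v < \<epsilon>) \<and>
     U 0 = u \<and> (\<forall>t\<ge>0. U t \<in> S) \<and> loc_abs_cont d U \<and>
     ((\<lambda>t. d (U t) u) \<longlongrightarrow> 0) (at_right 0) \<and>
     (\<forall>w\<in>S. AE t in lborel. t > 0 \<longrightarrow>
        (\<exists>D. ((\<lambda>s. (d (U s) w)\<^sup>2 / 2) has_real_derivative D) (at t) \<and>
             (E w < \<infinity> \<longrightarrow> E (U t) < \<infinity> \<and> D + enn2real (E (U t)) \<le> enn2real (E w))))"

end

theory Submission
  imports Defs
begin

text \<open>Each \<open>u\<^sub>t\<close> is essentially separably valued, so the rational times provide a countable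
  set \<open>C\<close> of essential values. Closing \<open>C\<close> under the points at rational times of geodesics
  gives a countable set whose closure \<open>Y\<close> is geodesically convex: by the CAT(0) inequality a
  geodesic depends continuously on its endpoints. Being closed and convex, \<open>Y\<close> is CAT(0).
  For rational \<open>t\<close>, \<open>u\<^sub>t\<close> takes values in \<open>Y\<close> a.e.; every other \<open>u\<^sub>t\<close> is an
  \<open>L\<^sup>2\<close>-limit of such maps by the local absolute continuity of the flow, and maps with values a.e.
  in a closed set form a closed subset of \<open>L\<^sup>2\<close>.\<close>

lemma geodesic_in_UNIV: "geodesic_in S g x y \<Longrightarrow> geodesic_in UNIV g x y"
  unfolding geodesic_in_def by auto

lemma geodesic_in_dist:
  "geodesic_in S g x y \<Longrightarrow> s \<in> {0..1} \<Longrightarrow> t \<in> {0..1} \<Longrightarrow> dist (g s) (g t) = \<bar>s - t\<bar> * dist x y"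
  unfolding geodesic_in_def by auto

lemma geodesic_in_dist_start: "geodesic_in S g x y \<Longrightarrow> t \<in> {0..1} \<Longrightarrow> dist x (g t) = t * dist x y"
  using geodesic_in_dist[of S g x y 0 t] unfolding geodesic_in_def by auto

lemma geodesic_in_dist_end: "geodesic_in S g x y \<Longrightarrow> t \<in> {0..1} \<Longrightarrow> dist y (g t) = (1 - t) * dist x y"
  using geodesic_in_dist[of S g x y 1 t] unfolding geodesic_in_def by auto

lemma geodesic_in_closure_rational_image:
  assumes "geodesic_in S g x y" and "t \<in> {0..1}"
  shows "g t \<in> closure (g ` (\<rat> \<inter> {0..1}))"
proof -
  have "(dist x y)-lipschitz_on {0..1} g"
    using geodesic_in_dist[OF assms(1)] by (intro lipschitz_onI) (auto simp: dist_real_def)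
  then have "continuous_on {0..1} g" by (rule lipschitz_on_continuous_on)
  moreover have "closure (\<rat> \<inter> {0..1}) = {0..1::real}"
    by (subst Int_commute, subst closure_convex_Int_superset) (auto simp: Rats_closure_real)
  ultimately have "g ` {0..1} \<subseteq> closure (g ` (\<rat> \<inter> {0..1}))"
    using image_closure_subset[of "\<rat> \<inter> {0..1}" g] closure_subset by (metis closed_closure)
  then show ?thesis using assms(2) by blast
qed

lemma CAT0_ineq:
  assumes "CAT0 S" and "geodesic_in S g x y" and "a \<in> S" and "t \<in> {0..1}"
  shows "(dist (g t) a)\<^sup>2 \<le> (1 - t) * (dist x a)\<^sup>2 + t * (dist y a)\<^sup>2 - t * (1 - t) * (dist x y)\<^sup>2"
  using assms unfolding CAT0_def by blast

text \<open>The right-hand side of the CAT(0) inequality for a geodesic of length \<open>D\<close>, tested at the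
  time-\<open>t\<close> point of a geodesic of length \<open>D'\<close> whose endpoints are moved by \<open>e1, e2 \<le> \<epsilon>\<close>.\<close>

lemma geodesic_perturbation_estimate:
  fixes t e1 e2 D D' \<epsilon> :: real
  assumes t: "t \<in> {0..1}" and e1: "0 \<le> e1" "e1 \<le> \<epsilon>" and e2: "0 \<le> e2" "e2 \<le> \<epsilon>"
    and D: "0 \<le> D" and D': "0 \<le> D'" "D' \<le> D + 2 * \<epsilon>"
  shows "(1 - t) * (e1 + t * D')\<^sup>2 + t * (e2 + (1 - t) * D')\<^sup>2 - t * (1 - t) * D\<^sup>2
           \<le> \<epsilon> * (14 * \<epsilon> + 8 * D)"
proof -
  define s where "s = t * (1 - t)"
  have t01: "0 \<le> t" "t \<le> 1" using t by auto
  have s01: "0 \<le> s" "s \<le> 1" unfolding s_def using t01 by (auto simp: mult_le_one)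
  have "e1\<^sup>2 \<le> \<epsilon>\<^sup>2" "e2\<^sup>2 \<le> \<epsilon>\<^sup>2" using e1 e2 by (auto intro: power_mono)
  then have "(1 - t) * e1\<^sup>2 + t * e2\<^sup>2 \<le> (1 - t) * \<epsilon>\<^sup>2 + t * \<epsilon>\<^sup>2"
    using t01 by (intro add_mono mult_left_mono) auto
  then have a: "(1 - t) * e1\<^sup>2 + t * e2\<^sup>2 \<le> \<epsilon>\<^sup>2" by (simp add: algebra_simps)
  have "2 * s * (e1 + e2) * D' \<le> 2 * (e1 + e2) * D'"
    using mult_left_le_one_le[of "2 * (e1 + e2) * D'" s] s01 e1 e2 D' by (simp add: algebra_simps)
  also have "\<dots> \<le> 2 * (2 * \<epsilon>) * (D + 2 * \<epsilon>)"
    using e1 e2 D' by (intro mult_mono) auto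
  finally have b: "2 * s * (e1 + e2) * D' \<le> 4 * \<epsilon> * (D + 2 * \<epsilon>)" by simp
  have c: "s * (D'\<^sup>2 - D\<^sup>2) \<le> 4 * \<epsilon> * D + 4 * \<epsilon>\<^sup>2"
  proof (cases "D' \<le> D")
    case True
    then have "s * (D'\<^sup>2 - D\<^sup>2) \<le> 0"
      using s01 D' by (intro mult_nonneg_nonpos) (auto simp: power_mono)
    moreover have "0 \<le> 4 * \<epsilon> * D + 4 * \<epsilon>\<^sup>2" using e1 D by simp
    ultimately show ?thesis by linarith
  next
    case False
    then have "s * (D'\<^sup>2 - D\<^sup>2) \<le> D'\<^sup>2 - D\<^sup>2"
      using s01 D by (intro mult_left_le_one_le) (auto simp: power_mono)
    also have "\<dots> \<le> (D + 2 * \<epsilon>)\<^sup>2 - D\<^sup>2" using D' by (simp add: power_mono)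
    finally show ?thesis by (simp add: power2_eq_square algebra_simps)
  qed
  have "(1 - t) * (e1 + t * D')\<^sup>2 + t * (e2 + (1 - t) * D')\<^sup>2 - t * (1 - t) * D\<^sup>2
      = (1 - t) * e1\<^sup>2 + t * e2\<^sup>2 + 2 * s * (e1 + e2) * D' + s * (D'\<^sup>2 - D\<^sup>2)"
    unfolding s_def by (simp add: power2_eq_square algebra_simps)
  also have "\<dots> \<le> \<epsilon>\<^sup>2 + 4 * \<epsilon> * (D + 2 * \<epsilon>) + (4 * \<epsilon> * D + 4 * \<epsilon>\<^sup>2)"
    using a b c by linarith
  also have "\<dots> \<le> \<epsilon> * (14 * \<epsilon> + 8 * D)" using e1 D by (simp add: power2_eq_square algebra_simps)
  finally show ?thesis .
qed

lemma CAT0_geodesic_stability: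
  fixes x y x' y' :: "'b::metric_space"
  assumes cat: "CAT0 (UNIV :: 'b set)"
    and g: "geodesic_in UNIV g x y" and g': "geodesic_in UNIV g' x' y'" and t: "t \<in> {0..1}"
    and x': "dist x x' \<le> \<epsilon>" and y': "dist y y' \<le> \<epsilon>"
  shows "(dist (g t) (g' t))\<^sup>2 \<le> \<epsilon> * (14 * \<epsilon> + 8 * dist x y)"
proof -
  have "dist x (g' t) \<le> dist x x' + t * dist x' y'"
    using dist_triangle[of x "g' t" x'] geodesic_in_dist_start[OF g' t] by simp
  then have sx: "(dist x (g' t))\<^sup>2 \<le> (dist x x' + t * dist x' y')\<^sup>2" by (simp add: power_mono)
  have "dist y (g' t) \<le> dist y y' + (1 - t) * dist x' y'"
    using dist_triangle[of y "g' t" y'] geodesic_in_dist_end[OF g' t] by simp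
  then have sy: "(dist y (g' t))\<^sup>2 \<le> (dist y y' + (1 - t) * dist x' y')\<^sup>2" by (simp add: power_mono)
  have "dist x' y' \<le> dist x y + 2 * \<epsilon>"
    using dist_triangle[of x' y' x] dist_triangle[of x y' y] x' y' by (simp add: dist_commute)
  then have "(1 - t) * (dist x x' + t * dist x' y')\<^sup>2 + t * (dist y y' + (1 - t) * dist x' y')\<^sup>2
      - t * (1 - t) * (dist x y)\<^sup>2 \<le> \<epsilon> * (14 * \<epsilon> + 8 * dist x y)"
    using t x' y' by (intro geodesic_perturbation_estimate) auto
  moreover have "(1 - t) * (dist x (g' t))\<^sup>2 \<le> (1 - t) * (dist x x' + t * dist x' y')\<^sup>2"
    and "t * (dist y (g' t))\<^sup>2 \<le> t * (dist y y' + (1 - t) * dist x' y')\<^sup>2"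
    using sx sy t by (auto intro: mult_left_mono)
  ultimately show ?thesis using CAT0_ineq[OF cat g UNIV_I t, of "g' t"] by linarith
qed

lemma CAT0_closed_subset:
  fixes Y :: "'b::metric_space set"
  assumes cat: "CAT0 (UNIV :: 'b set)" and "closed Y"
    and convex: "\<And>x y. x \<in> Y \<Longrightarrow> y \<in> Y \<Longrightarrow> \<exists>\<gamma>. geodesic_in Y \<gamma> x y"
  shows "CAT0 Y"
proof -
  have "\<exists>l\<in>Y. f \<longlonglongrightarrow> l" if "\<forall>n. f n \<in> Y" and "Cauchy f" for f
  proof -
    obtain l where "f \<longlonglongrightarrow> l" using cat \<open>Cauchy f\<close> unfolding CAT0_def by blast
    moreover have "l \<in> Y" using closed_sequentially[OF \<open>closed Y\<close>] that calculation by blast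
    ultimately show ?thesis by blast
  qed
  then show ?thesis
    unfolding CAT0_def using convex CAT0_ineq[OF cat geodesic_in_UNIV] by blast
qed

definition some_geodesic :: "'b::metric_space \<Rightarrow> 'b \<Rightarrow> real \<Rightarrow> 'b" where
  "some_geodesic x y = (SOME g. geodesic_in UNIV g x y)"

lemma geodesic_some_geodesic:
  fixes x y :: "'b::metric_space"
  assumes "CAT0 (UNIV :: 'b set)"
  shows "geodesic_in UNIV (some_geodesic x y) x y"
proof -
  have "\<exists>g. geodesic_in UNIV g x y" using assms unfolding CAT0_def by blast
  then show ?thesis unfolding some_geodesic_def by (rule someI_ex)
qed

primrec rat_geodesic_iter :: "'b::metric_space set \<Rightarrow> nat \<Rightarrow> 'b set" where
  "rat_geodesic_iter C 0 = C"
| "rat_geodesic_iter C (Suc n) = rat_geodesic_iter C n \<union>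
     (\<lambda>(x, y, q). some_geodesic x y q) ` (rat_geodesic_iter C n \<times> rat_geodesic_iter C n \<times> (\<rat> \<inter> {0..1}))"

definition rat_geodesic_hull :: "'b::metric_space set \<Rightarrow> 'b set" where
  "rat_geodesic_hull C = (\<Union>n. rat_geodesic_iter C n)"

lemma countable_rat_geodesic_hull: "countable C \<Longrightarrow> countable (rat_geodesic_hull C)"
proof -
  assume "countable C"
  then have "countable (rat_geodesic_iter C n)" for n
    by (induction n) (auto intro!: countable_SIGMA countable_Int1 countable_rat)
  then show ?thesis unfolding rat_geodesic_hull_def by blast
qed

lemma subset_rat_geodesic_hull: "C \<subseteq> rat_geodesic_hull C"
  unfolding rat_geodesic_hull_def using rat_geodesic_iter.simps(1) by blast

lemma some_geodesic_in_rat_geodesic_hull: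
  assumes "x \<in> rat_geodesic_hull C" and "y \<in> rat_geodesic_hull C" and "q \<in> \<rat> \<inter> {0..1}"
  shows "some_geodesic x y q \<in> rat_geodesic_hull C"
proof -
  have mono: "rat_geodesic_iter C m \<subseteq> rat_geodesic_iter C n" if "m \<le> n" for m n
    using that by (induction n rule: dec_induct) auto
  obtain m k where "x \<in> rat_geodesic_iter C m" and "y \<in> rat_geodesic_iter C k"
    using assms unfolding rat_geodesic_hull_def by blast
  then have "x \<in> rat_geodesic_iter C (max m k)" and "y \<in> rat_geodesic_iter C (max m k)"
    using mono[of m "max m k"] mono[of k "max m k"] by auto
  then have "some_geodesic x y q \<in> rat_geodesic_iter C (Suc (max m k))" using assms(3) by force
  then show ?thesis unfolding rat_geodesic_hull_def by blast
qed

lemma geodesic_in_closure_rat_geodesic_hull: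
  fixes x y :: "'b::metric_space"
  assumes cat: "CAT0 (UNIV :: 'b set)"
    and x: "x \<in> closure (rat_geodesic_hull C)" and y: "y \<in> closure (rat_geodesic_hull C)"
    and g: "geodesic_in UNIV g x y" and t: "t \<in> {0..1}"
  shows "g t \<in> closure (rat_geodesic_hull C)"
proof -
  let ?D = "rat_geodesic_hull C"
  have "\<exists>z\<in>closure ?D. dist z (g t) < e" if e: "0 < e" for e
  proof -
    define \<eta> where "\<eta> = min 1 ((e / 2)\<^sup>2 / (14 + 8 * dist x y))"
    have c: "0 < 14 + 8 * dist x y" by (simp add: add_pos_nonneg)
    have "\<eta> \<le> (e / 2)\<^sup>2 / (14 + 8 * dist x y)" unfolding \<eta>_def by simp
    then have \<eta>: "\<eta> * (14 + 8 * dist x y) \<le> (e / 2)\<^sup>2" using c by (simp add: pos_le_divide_eq)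
    have "0 < \<eta>" "\<eta> \<le> 1" unfolding \<eta>_def using c e by simp_all
    obtain x' where x': "x' \<in> ?D" "dist x' x < \<eta>"
      using x \<open>0 < \<eta>\<close> unfolding closure_approachable by blast
    obtain y' where y': "y' \<in> ?D" "dist y' y < \<eta>"
      using y \<open>0 < \<eta>\<close> unfolding closure_approachable by blast
    have "(dist (g t) (some_geodesic x' y' t))\<^sup>2 \<le> \<eta> * (14 * \<eta> + 8 * dist x y)"
      using x'(2) y'(2)
      by (intro CAT0_geodesic_stability[OF cat g geodesic_some_geodesic[OF cat] t]) (auto simp: dist_commute)
    also have "\<dots> \<le> \<eta> * (14 + 8 * dist x y)" using \<open>0 < \<eta>\<close> \<open>\<eta> \<le> 1\<close> by (intro mult_left_mono) auto
    also have "\<dots> \<le> (e / 2)\<^sup>2" by (fact \<eta>)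
    finally have "dist (g t) (some_geodesic x' y' t) \<le> e / 2" by (rule power2_le_imp_le) (use e in simp)
    then have "dist (some_geodesic x' y' t) (g t) < e" using e by (simp add: dist_commute)
    moreover have "some_geodesic x' y' ` (\<rat> \<inter> {0..1}) \<subseteq> ?D"
      using some_geodesic_in_rat_geodesic_hull[OF x'(1) y'(1)] by blast
    then have "some_geodesic x' y' t \<in> closure ?D"
      using geodesic_in_closure_rational_image[OF geodesic_some_geodesic[OF cat] t] closure_mono by blast
    ultimately show ?thesis by blast
  qed
  then show ?thesis using closure_approachable[of "g t" "closure ?D"] by simp
qed

lemma countable_subset_separable_CAT0:
  fixes C :: "'b::metric_space set"
  assumes cat: "CAT0 (UNIV :: 'b set)" and "countable C"
  obtains Y where "separable_set Y" "CAT0 Y" "closed Y" "C \<subseteq> Y"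
proof
  let ?Y = "closure (rat_geodesic_hull C)"
  show "separable_set ?Y"
    unfolding separable_set_def using countable_rat_geodesic_hull[OF \<open>countable C\<close>] closure_subset by blast
  show "CAT0 ?Y"
  proof (rule CAT0_closed_subset[OF cat closed_closure])
    fix x y assume "x \<in> ?Y" "y \<in> ?Y"
    then have "geodesic_in ?Y (some_geodesic x y) x y"
      using geodesic_in_closure_rat_geodesic_hull[OF cat _ _ geodesic_some_geodesic[OF cat]]
        geodesic_some_geodesic[OF cat, of x y]
      unfolding geodesic_in_def by blast
    then show "\<exists>\<gamma>. geodesic_in ?Y \<gamma> x y" by blast
  qed
  show "closed ?Y" by simp
  show "C \<subseteq> ?Y" using subset_rat_geodesic_hull closure_subset by blast
qed

lemma set_nn_integral_dist_sq_L2Y_finite: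
  fixes M :: "'a::metric_space measure" and ybar :: "'b::metric_space"
  assumes \<Omega>: "\<Omega> \<in> sets M" and v: "v \<in> L2Y M \<Omega> ybar" and w: "w \<in> L2Y M \<Omega> ybar"
  shows "(\<integral>\<^sup>+x\<in>\<Omega>. ennreal ((dist (v x) (w x))\<^sup>2) \<partial>M) < \<infinity>"
proof -
  let ?N = "restrict_space M \<Omega>"
  have \<Omega>': "\<Omega> \<inter> space M \<in> sets M" using \<Omega> by auto
  have vm: "v \<in> borel_measurable ?N" and wm: "w \<in> borel_measurable ?N"
    using v w unfolding L2Y_def by auto
  have [measurable]: "(\<lambda>x. dist (v x) ybar) \<in> borel_measurable ?N" "(\<lambda>x. dist (w x) ybar) \<in> borel_measurable ?N"
    by (intro borel_measurable_continuous_on[OF _ vm] borel_measurable_continuous_on[OF _ wm] continuous_intros)+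
  have "(\<integral>\<^sup>+x. ennreal ((dist (v x) (w x))\<^sup>2) \<partial>?N)
      \<le> (\<integral>\<^sup>+x. 2 * ennreal ((dist (v x) ybar)\<^sup>2) + 2 * ennreal ((dist (w x) ybar)\<^sup>2) \<partial>?N)"
  proof (rule nn_integral_mono)
    fix x
    have "dist (v x) (w x) \<le> dist (v x) ybar + dist (w x) ybar"
      using dist_triangle3[of "v x" "w x" ybar] by (simp add: dist_commute)
    then have "(dist (v x) (w x))\<^sup>2 \<le> 2 * (dist (v x) ybar)\<^sup>2 + 2 * (dist (w x) ybar)\<^sup>2"
      using sum_squares_bound[of "dist (v x) ybar" "dist (w x) ybar"]
      by (smt (verit, best) power_mono power2_sum zero_le_dist)
    then have "ennreal ((dist (v x) (w x))\<^sup>2) \<le> ennreal (2 * (dist (v x) ybar)\<^sup>2 + 2 * (dist (w x) ybar)\<^sup>2)"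
      by (rule ennreal_leI)
    then show "ennreal ((dist (v x) (w x))\<^sup>2) \<le> 2 * ennreal ((dist (v x) ybar)\<^sup>2) + 2 * ennreal ((dist (w x) ybar)\<^sup>2)"
      by (simp add: ennreal_plus ennreal_mult)
  qed
  also have "\<dots> = 2 * (\<integral>\<^sup>+x. ennreal ((dist (v x) ybar)\<^sup>2) \<partial>?N)
                    + 2 * (\<integral>\<^sup>+x. ennreal ((dist (w x) ybar)\<^sup>2) \<partial>?N)"
    by (simp add: nn_integral_add nn_integral_cmult)
  also have "\<dots> < \<infinity>"
    using v w unfolding L2Y_def nn_integral_restrict_space[OF \<Omega>'] by (simp add: ennreal_mult_less_top)
  finally show ?thesis unfolding nn_integral_restrict_space[OF \<Omega>'] .
qed

lemma set_nn_integral_dist_sq_eq_dL2: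
  fixes M :: "'a::metric_space measure" and ybar :: "'b::metric_space"
  assumes "\<Omega> \<in> sets M" and "v \<in> L2Y M \<Omega> ybar" and "w \<in> L2Y M \<Omega> ybar"
  shows "(\<integral>\<^sup>+x\<in>\<Omega>. ennreal ((dist (v x) (w x))\<^sup>2) \<partial>M) = ennreal ((dL2 M \<Omega> v w)\<^sup>2)"
  using set_nn_integral_dist_sq_L2Y_finite[OF assms] unfolding dL2_def by (simp add: enn2real_nonneg)

lemma AE_in_closed_of_L2_approx:
  fixes M :: "'a::metric_space measure" and Y :: "'b::metric_space set"
  assumes \<Omega>: "\<Omega> \<in> sets M" and "closed Y" and "Y \<noteq> {}" and v: "v \<in> L2Y M \<Omega> ybar"
    and approx: "\<And>e. 0 < e \<Longrightarrow>
      \<exists>w\<in>L2Y M \<Omega> ybar. (AE x in M. x \<in> \<Omega> \<longrightarrow> w x \<in> Y) \<and> dL2 M \<Omega> w v < e"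
  shows "AE x in M. x \<in> \<Omega> \<longrightarrow> v x \<in> Y"
proof -
  let ?N = "restrict_space M \<Omega>"
  have \<Omega>': "\<Omega> \<inter> space M \<in> sets M" using \<Omega> by auto
  define h where "h x = infdist (v x) Y" for x
  have "v \<in> borel_measurable ?N" using v unfolding L2Y_def by auto
  then have [measurable]: "h \<in> borel_measurable ?N"
    unfolding h_def by (rule borel_measurable_continuous_on[rotated]) (intro continuous_intros)
  have small: "(\<integral>\<^sup>+x. ennreal ((h x)\<^sup>2) \<partial>?N) \<le> 0 + ennreal e" if "0 < e" for e
  proof -
    obtain w where w: "w \<in> L2Y M \<Omega> ybar" "AE x in ?N. w x \<in> Y" "dL2 M \<Omega> w v < sqrt e"
      using approx[of "sqrt e"] \<open>0 < e\<close> by (auto simp: AE_restrict_space_iff[OF \<Omega>'])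
    have "(\<integral>\<^sup>+x. ennreal ((h x)\<^sup>2) \<partial>?N) \<le> (\<integral>\<^sup>+x. ennreal ((dist (w x) (v x))\<^sup>2) \<partial>?N)"
      using w(2)
    proof (intro nn_integral_mono_AE, eventually_elim)
      case (elim x)
      then have "h x \<le> dist (v x) (w x)" unfolding h_def by (simp add: infdist_le)
      then show ?case by (intro ennreal_leI power_mono) (auto simp: h_def dist_commute infdist_nonneg)
    qed
    also have "\<dots> = ennreal ((dL2 M \<Omega> w v)\<^sup>2)"
      using set_nn_integral_dist_sq_eq_dL2[OF \<Omega> w(1) v] by (simp add: nn_integral_restrict_space[OF \<Omega>'])
    also have "\<dots> \<le> ennreal e"
    proof -
      have "0 \<le> dL2 M \<Omega> w v" unfolding dL2_def by simp
      then have "(dL2 M \<Omega> w v)\<^sup>2 \<le> (sqrt e)\<^sup>2" using w(3) by (intro power_mono) auto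
      then show ?thesis using \<open>0 < e\<close> by (intro ennreal_leI) simp
    qed
    finally show ?thesis by simp
  qed
  have "(\<integral>\<^sup>+x. ennreal ((h x)\<^sup>2) \<partial>?N) \<le> 0"
    using small by (rule ennreal_le_epsilon)
  then have "AE x in ?N. h x = 0" by (simp add: nn_integral_0_iff_AE)
  then have "AE x in ?N. v x \<in> Y"
    by eventually_elim
      (use \<open>closed Y\<close> \<open>Y \<noteq> {}\<close> in \<open>simp add: h_def in_closure_iff_infdist_zero[symmetric]\<close>)
  then show ?thesis by (simp add: AE_restrict_space_iff[OF \<Omega>'])
qed

lemma loc_abs_cont_left_continuous:
  assumes U: "loc_abs_cont d U" and "0 < t" and "0 < e"
  obtains \<delta> where "0 < \<delta>" and "\<And>s. t - \<delta> < s \<Longrightarrow> s \<le> t \<Longrightarrow> d (U s) (U t) < e"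
proof -
  obtain g where gi: "g integrable_on {t/2..t}"
    and g: "\<And>s r. t/2 \<le> s \<Longrightarrow> s \<le> r \<Longrightarrow> r \<le> t \<Longrightarrow> d (U s) (U r) \<le> integral {s..r} g"
    using U[unfolded loc_abs_cont_def, rule_format, of "t/2" t] \<open>0 < t\<close> by auto
  have "continuous_on {t/2..t} (\<lambda>s. integral {s..t} g)"
    using gi by (rule indefinite_integral_continuous_1')
  moreover have "t \<in> {t/2..t}" using \<open>0 < t\<close> by simp
  ultimately obtain \<delta> where "0 < \<delta>"
    and \<delta>: "\<And>s. s \<in> {t/2..t} \<Longrightarrow> dist s t < \<delta> \<Longrightarrow> dist (integral {s..t} g) (integral {t..t} g) < e"
    using \<open>0 < e\<close> unfolding continuous_on_iff by blast
  show ?thesis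
  proof
    show "0 < min (t/2) \<delta>" using \<open>0 < t\<close> \<open>0 < \<delta>\<close> by simp
    fix s assume "t - min (t/2) \<delta> < s" "s \<le> t"
    then have "d (U s) (U t) \<le> integral {s..t} g" and "dist (integral {s..t} g) 0 < e"
      using g \<delta>[of s] by (auto simp: dist_real_def)
    then show "d (U s) (U t) < e" by (simp add: dist_real_def)
  qed
qed

lemma L2Y_curve_values_in_separable_CAT0:
  fixes M :: "'a::metric_space measure" and ybar :: "'b::metric_space" and U :: "real \<Rightarrow> 'a \<Rightarrow> 'b"
  assumes cat: "CAT0 (UNIV :: 'b set)" and \<Omega>: "\<Omega> \<in> sets M"
    and curve: "\<And>t. 0 \<le> t \<Longrightarrow> U t \<in> L2Y M \<Omega> ybar" and lac: "loc_abs_cont (dL2 M \<Omega>) U"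
  shows "\<exists>Yt. separable_set Yt \<and> CAT0 Yt \<and> (\<forall>t\<ge>0. AE x in M. x \<in> \<Omega> \<longrightarrow> U t x \<in> Yt)"
proof -
  have "\<exists>Z C. Z \<in> null_sets M \<and> countable C \<and> U t ` (\<Omega> - Z) \<subseteq> closure C" if "0 \<le> t" for t
    using curve[OF that] unfolding L2Y_def separable_set_def by blast
  then obtain Z C where ZC: "\<And>t. 0 \<le> t \<Longrightarrow>
      Z t \<in> null_sets M \<and> countable (C t) \<and> U t ` (\<Omega> - Z t) \<subseteq> closure (C t)"
    by metis
  have "countable (insert ybar (\<Union>q\<in>\<rat> \<inter> {0..}. C q))"
    using ZC by (auto intro!: countable_UN countable_Int1 countable_rat)
  then obtain Y where Y: "separable_set Y" "CAT0 Y" "closed Y" "insert ybar (\<Union>q\<in>\<rat> \<inter> {0..}. C q) \<subseteq> Y"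
    using countable_subset_separable_CAT0[OF cat] by blast
  have rat: "AE x in M. x \<in> \<Omega> \<longrightarrow> U q x \<in> Y" if "q \<in> \<rat>" "0 \<le> q" for q
  proof (rule AE_I'[of "Z q"])
    show "Z q \<in> null_sets M" using ZC[OF \<open>0 \<le> q\<close>] by blast
    have "closure (C q) \<subseteq> Y" using Y(3,4) that by (intro closure_minimal) auto
    then show "{x \<in> space M. \<not> (x \<in> \<Omega> \<longrightarrow> U q x \<in> Y)} \<subseteq> Z q" using ZC[OF \<open>0 \<le> q\<close>] by blast
  qed
  have "AE x in M. x \<in> \<Omega> \<longrightarrow> U t x \<in> Y" if "0 \<le> t" for t
  proof (cases "t \<in> \<rat>")
    case True
    then show ?thesis using rat \<open>0 \<le> t\<close> by blast
  next
    case False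
    then have "0 < t" using \<open>0 \<le> t\<close> by (cases "t = 0") auto
    show ?thesis
    proof (rule AE_in_closed_of_L2_approx[OF \<Omega> \<open>closed Y\<close> _ curve[OF \<open>0 \<le> t\<close>]])
      show "Y \<noteq> {}" using Y(4) by blast
      fix e :: real assume "0 < e"
      obtain \<delta> where "0 < \<delta>" and \<delta>: "\<And>s. t - \<delta> < s \<Longrightarrow> s \<le> t \<Longrightarrow> dL2 M \<Omega> (U s) (U t) < e"
        using loc_abs_cont_left_continuous[OF lac \<open>0 < t\<close> \<open>0 < e\<close>] by blast
      obtain q where "q \<in> \<rat>" "max 0 (t - \<delta>) < q" "q < t"
        using Rats_dense_in_real[of "max 0 (t - \<delta>)" t] \<open>0 < t\<close> \<open>0 < \<delta>\<close> by auto
      then show "\<exists>w\<in>L2Y M \<Omega> ybar. (AE x in M. x \<in> \<Omega> \<longrightarrow> w x \<in> Y) \<and> dL2 M \<Omega> w (U t) < e"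
        using rat[of q] curve[of q] \<delta>[of q] by auto
    qed
  qed
  then show ?thesis using Y(1,2) by blast
qed

theorem proposition4p21:
  fixes M :: "'a::polish_space measure" and K N :: real
    and ybar :: "'b::metric_space" and \<Omega> :: "'a set" and ubar u :: "'a \<Rightarrow> 'b"
  assumes "RCD K N M"
    and "CAT0 (UNIV :: 'b set)"
    and "open \<Omega>"
    and "ubar \<in> KS12 M \<Omega> ybar"
    and "u \<in> L2Y M \<Omega> ybar"
  shows "(\<forall>U. grad_flow (L2Y M \<Omega> ybar) (dL2 M \<Omega>) (E_KS_bc M \<Omega> ybar ubar) u U \<longrightarrow>
            (\<exists>Yt. separable_set Yt \<and> CAT0 Yt \<and> (\<forall>t\<ge>0. AE x in M. x \<in> \<Omega> \<longrightarrow> U t x \<in> Yt)))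
       \<and> (\<forall>U. grad_flow (L2Y M \<Omega> ybar) (dL2 M \<Omega>) (E_KS M \<Omega>) u U \<longrightarrow>
            (\<exists>Yt. separable_set Yt \<and> CAT0 Yt \<and> (\<forall>t\<ge>0. AE x in M. x \<in> \<Omega> \<longrightarrow> U t x \<in> Yt)))"
proof -
  have "\<Omega> \<in> sets M" using assms(1,3) unfolding RCD_def by simp
  then have "\<exists>Yt. separable_set Yt \<and> CAT0 Yt \<and> (\<forall>t\<ge>0. AE x in M. x \<in> \<Omega> \<longrightarrow> U t x \<in> Yt)"
    if "grad_flow (L2Y M \<Omega> ybar) (dL2 M \<Omega>) E u U" for E U
    using that L2Y_curve_values_in_separable_CAT0[OF assms(2)] unfolding grad_flow_def by blast
  then show ?thesis by blast
qed

end
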